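(* Let $M\ge0$. In the quotient $R_{M,n}/J_M$, the images of $\{e_\lambda:\lambda\in B^{(k,r)}_M\}$ span; i.e. for every $\lambda\in S^{(k,r)}_M$ the image of $e_\lambda$ is a $\mathbb C$-linear combination of images of $e_\mu$ with $\mu\in B^{(k,r)}_M$.
   Context: Fix integers $n\ge2$, $1\le k\le n-1$, $r\ge2$, $\tau=e^{2\pi\sqrt{-1}/(r-1)}$. Let $P=\mathbb Z^n$ and $P_M=\{\lambda\in P:-M\le\lambda_i\le M\ \forall i\}$. Let $R_{M,n}$ be the $\mathbb C$-vector space with basis $\{e_\lambda:\lambda\in P_M\}$ (identified with $W^{\otimes n}$, $W=\mathrm{span}_{\mathbb C}\{e_d:-M\le d\le M\}$, via $e_\lambda=e_{\lambda_1}\otimes\cdots\otimes e_{\lambda_n}$). Set $e(w)=\sum_{d=-M}^Me_dw^d$ for $w\in\mathbb C^\times$. Let $J_M\subset R_{M,n}$ be the span of all vectors $e(z_1)\otimes\cdots\otimes e(z_n)$ where $z\in(\mathbb C^\times)^n$ is such that for some $i_1<\dots<i_{k+1}$, some $w\in\mathbb C^\times$ and some $p_1,\dots,p_{k+1}\in\{0,\dots,r-2\}$ one has $z_{i_a}=\tau^{p_a}w$ for $1\le a\le k+1$. For $\lambda\in P$, $\rho(\lambda)$ is the unique permutation of $(\frac{n-1}2,\dots,-\frac{n-1}2)$ with $\rho(\lambda)_i>\rho(\lambda)_j$ iff $\lambda_i>\lambda_j$ or ($\lambda_i=\lambda_j$, $i<j$). For $a\ge2,b\ge1$, $(i,j)$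 is a neighborhood of type $(a,b)$ in $\lambda$ if $\rho(\lambda)_i-\rho(\lambda)_j=a-1$ and either $\lambda_i-\lambda_j\le b-1$, or $\lambda_i-\lambda_j=b$ and $j<i$. $S^{(k,r)}$: the $\lambda$ having a neighborhood of type $(k+1,r-1)$; $B^{(k,r)}=P\setminus S^{(k,r)}$; $S^{(k,r)}_M=S^{(k,r)}\cap P_M$, $B^{(k,r)}_M=B^{(k,r)}\cap P_M$. *)

theory Defs
  imports Complex_Main
begin

text \<open>Weights lambda in P = Z^n are integer lists of length n (0-based indices).
  Vectors of R_{M,n} are functions int list => complex supported on P_M.\<close>

definition PM :: "nat \<Rightarrow> nat \<Rightarrow> int list set" where
  "PM n M = {l. length l = n \<and> (\<forall>i<n. \<bar>l ! i\<bar> \<le> int M)}"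

definition ebas :: "int list \<Rightarrow> int list \<Rightarrow> complex" where
  "ebas l = (\<lambda>m. if m = l then 1 else 0)"

text \<open>e(z_1) tensor ... tensor e(z_n): coefficient of e_mu is prod z_i^mu_i.\<close>
definition etens :: "nat \<Rightarrow> nat \<Rightarrow> (nat \<Rightarrow> complex) \<Rightarrow> int list \<Rightarrow> complex" where
  "etens n M z = (\<lambda>m. if m \<in> PM n M then (\<Prod>i<n. z i powi (m ! i)) else 0)"

definition tau :: "nat \<Rightarrow> complex" where
  "tau r = exp (2 * pi * \<i> / of_nat (r - 1))"

definition bad_point :: "nat \<Rightarrow> nat \<Rightarrow> nat \<Rightarrow> (nat \<Rightarrow> complex) \<Rightarrow> bool" where
  "bad_point n k r z \<longleftrightarrow> (\<forall>i<n. z i \<noteq> 0) \<and>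
     (\<exists>idx :: nat \<Rightarrow> nat. \<exists>w :: complex. \<exists>p :: nat \<Rightarrow> nat.
        (\<forall>a<k. idx a < idx (Suc a)) \<and> idx k < n \<and> w \<noteq> 0 \<and>
        (\<forall>a\<le>k. p a \<le> r - 2 \<and> z (idx a) = tau r ^ p a * w))"

definition Jgen :: "nat \<Rightarrow> nat \<Rightarrow> nat \<Rightarrow> nat \<Rightarrow> (int list \<Rightarrow> complex) set" where
  "Jgen n k r M = {etens n M z | z. bad_point n k r z}"

definition cspan :: "('a \<Rightarrow> complex) set \<Rightarrow> ('a \<Rightarrow> complex) set" where
  "cspan S = {v. \<exists>F c. finite F \<and> F \<subseteq> S \<and> v = (\<lambda>x. \<Sum>f\<in>F. c f * f x)}"

definition rank_pos :: "int list \<Rightarrow> nat \<Rightarrow> nat" where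
  "rank_pos l i = card {j. j < length l \<and> (l ! j > l ! i \<or> (l ! j = l ! i \<and> j < i))}"

definition rho :: "int list \<Rightarrow> nat \<Rightarrow> real" where
  "rho l i = (real (length l) - 1) / 2 - real (rank_pos l i)"

definition neighborhood :: "nat \<Rightarrow> nat \<Rightarrow> int list \<Rightarrow> nat \<Rightarrow> nat \<Rightarrow> bool" where
  "neighborhood a b l i j \<longleftrightarrow> i < length l \<and> j < length l \<and>
     rho l i - rho l j = real a - 1 \<and>
     (l ! i - l ! j \<le> int b - 1 \<or> (l ! i - l ! j = int b \<and> j < i))"

definition Sset :: "nat \<Rightarrow> nat \<Rightarrow> nat \<Rightarrow> int list set" where
  "Sset n k r = {l. length l = n \<and> (\<exists>i j. neighborhood (k + 1) (r - 1) l i j)}"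

definition Bset :: "nat \<Rightarrow> nat \<Rightarrow> nat \<Rightarrow> int list set" where
  "Bset n k r = {l. length l = n} - Sset n k r"

end

(*
  For l in S, a neighbourhood (i, j) of type (k + 1, r - 1) singles out the window Q of the
  k + 1 positions ranked from i to j.  Averaging e(z_1) (x) ... (x) e(z_n) over points z of the
  bad locus, with z_q = tau^(p_q) w on Q and w, p_q and the remaining z_q running over roots of
  unity, is a discrete Fourier inversion: it produces the indicator of the fibre of l, i.e. of
  all m in P_M that agree with l off Q, have the same sum over Q and are congruent to l modulo
  r - 1 on Q.  Hence e_l is congruent modulo J_M to minus the sum of the other e_m of the fibre.
  The entries of l on Q lie in an interval of length at most r - 1, so such a move cannot
  decrease the sum of squares, and if it keeps it fixed it shifts weight to earlier positions.
  So every other m in the fibre has larger potential (sum of m_q^2, minus sum of q m_q) in the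
  lexicographic order, and well-founded induction over the finite set P_M concludes.
*)

theory Submission
  imports Defs "HOL-Analysis.Complex_Transcendental" "HOL-Library.FuncSet"
    "HOL-Library.Product_Lexorder"
begin

section \<open>Roots of unity\<close>

lemma prod_power_int_eq_power_int_sum:
  fixes x :: "'a :: field"
  assumes "x \<noteq> 0"
  shows "(\<Prod>a\<in>A. x powi f a) = x powi (\<Sum>a\<in>A. f a)"
  using assms by (induction A rule: infinite_finite_induct) (simp_all add: power_int_add)

lemma prod_if_dvd_else_eq_0:
  fixes x :: "'a :: field" and n :: nat
  assumes "Q \<subseteq> {..<n}" "x \<noteq> 0"
  shows "(\<Prod>q<n. if q \<in> Q then (if R dvd d q then x powi d q else 0) else if d q = 0 then 1 else 0)
    = (if \<forall>q<n. if q \<in> Q then R dvd d q else d q = 0 then x powi (\<Sum>q\<in>Q. d q) else 0)"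
proof (cases "\<forall>q<n. if q \<in> Q then R dvd d q else d q = 0")
  case True
  then have "(\<Prod>q<n. if q \<in> Q then (if R dvd d q then x powi d q else 0) else if d q = 0 then 1 else 0)
      = (\<Prod>q\<in>Q. x powi d q)"
    using assms(1) by (intro prod.mono_neutral_cong_right) auto
  with True assms(2) show ?thesis
    by (simp add: prod_power_int_eq_power_int_sum)
next
  case False
  then show ?thesis
    by (auto intro!: prod_zero split: if_splits)
qed

definition unit_root :: "nat \<Rightarrow> complex" where
  "unit_root N = exp (2 * pi * \<i> / of_nat N)"

lemma tau_eq_unit_root: "tau r = unit_root (r - 1)"
  by (simp add: tau_def unit_root_def)

lemma unit_root_nonzero [simp]: "unit_root N \<noteq> 0"
  by (simp add: unit_root_def)

lemma unit_root_powi: "unit_root N powi d = exp (2 * pi * \<i> * of_int d / of_nat N)"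
  unfolding unit_root_def exp_power_int by (simp add: mult_ac)

lemma unit_root_powi_eq_1_iff:
  assumes "N > 0"
  shows "unit_root N powi d = 1 \<longleftrightarrow> int N dvd d"
proof
  assume "unit_root N powi d = 1"
  then obtain m :: int where "2 * pi * of_int d / real N = 2 * of_int m * pi"
    unfolding unit_root_powi exp_eq_1 by auto
  then have "of_int d = real N * of_int m"
    using assms by (simp add: field_simps)
  then have "d = int N * m"
    by (metis of_int_eq_iff of_int_mult of_int_of_nat_eq)
  then show "int N dvd d" by simp
next
  assume "int N dvd d"
  then obtain m where "d = int N * m" by (elim dvdE)
  then have "unit_root N powi d = exp (2 * pi * \<i>) powi m"
    using assms by (simp add: unit_root_powi exp_power_int field_simps)
  then show "unit_root N powi d = 1" by simp
qed

lemma sum_unit_root_powers: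
  assumes "N > 0"
  shows "(\<Sum>a<N. (unit_root N ^ a) powi d) = (if int N dvd d then of_nat N else 0)"
proof -
  define u where "u = unit_root N powi d"
  have powers: "(unit_root N ^ a) powi d = u ^ a" for a
    by (simp add: u_def power_int_power power_int_mult mult.commute flip: power_int_power')
  have "unit_root N ^ N = 1"
    using unit_root_powi_eq_1_iff[OF assms, of "int N"] by simp
  then have "u ^ N = 1"
    by (simp flip: powers)
  then show ?thesis
    using unit_root_powi_eq_1_iff[OF assms, of d]
    by (auto simp: powers u_def geometric_sum)
qed

lemma sum_unit_root_powers_small:
  assumes "\<bar>d\<bar> < int N"
  shows "(\<Sum>a<N. (unit_root N ^ a) powi d) = (if d = 0 then of_nat N else 0)"
proof -
  have "int N dvd d \<longleftrightarrow> d = 0"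
    using assms dvd_imp_le_int[of d "int N"] by auto
  then show ?thesis
    using assms sum_unit_root_powers[of N d] by simp
qed

lemma sum_unit_root_powers_mult:
  assumes "N > 0"
  shows "(\<Sum>a<N. (unit_root N ^ a * w) powi d) = (if int N dvd d then of_nat N * w powi d else 0)"
  using sum_unit_root_powers[OF assms, of d]
  by (simp add: power_int_mult_distrib flip: sum_distrib_right)

lemma cspan_superset: "f \<in> S \<Longrightarrow> f \<in> cspan S"
  unfolding cspan_def by (intro CollectI exI[of _ "{f}"] exI[of _ "\<lambda>_. 1"]) simp

lemma cspan_mono: "S \<subseteq> T \<Longrightarrow> u \<in> cspan S \<Longrightarrow> u \<in> cspan T"
  unfolding cspan_def by blast

lemma cspan_add:
  assumes "u \<in> cspan S" "v \<in> cspan S"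
  shows "(\<lambda>x. u x + v x) \<in> cspan S"
proof -
  obtain F c G d where F: "finite F" "F \<subseteq> S" "u = (\<lambda>x. \<Sum>f\<in>F. c f * f x)"
    and G: "finite G" "G \<subseteq> S" "v = (\<lambda>x. \<Sum>f\<in>G. d f * f x)"
    using assms unfolding cspan_def by blast
  define e where "e f = (if f \<in> F then c f else 0) + (if f \<in> G then d f else 0)" for f
  have "(\<Sum>f\<in>F \<union> G. (if f \<in> F then c f else 0) * f x) = (\<Sum>f\<in>F. c f * f x)" for x
    by (rule sum.mono_neutral_cong_right) (use F G in auto)
  moreover have "(\<Sum>f\<in>F \<union> G. (if f \<in> G then d f else 0) * f x) = (\<Sum>f\<in>G. d f * f x)" for x
    by (rule sum.mono_neutral_cong_right) (use F G in auto)
  ultimately have "(\<lambda>x. u x + v x) = (\<lambda>x. \<Sum>f\<in>F \<union> G. e f * f x)"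
    by (simp add: F G e_def distrib_right sum.distrib)
  then show ?thesis
    unfolding cspan_def using F G by blast
qed

lemma cspan_scale:
  assumes "u \<in> cspan S"
  shows "(\<lambda>x. a * u x) \<in> cspan S"
proof -
  obtain F c where F: "finite F" "F \<subseteq> S" "u = (\<lambda>x. \<Sum>f\<in>F. c f * f x)"
    using assms unfolding cspan_def by blast
  then have "(\<lambda>x. a * u x) = (\<lambda>x. \<Sum>f\<in>F. (a * c f) * f x)"
    by (simp add: sum_distrib_left mult.assoc)
  with F(1,2) show ?thesis
    unfolding cspan_def by (intro CollectI exI[of _ F] exI[of _ "\<lambda>f. a * c f"]) simp
qed

lemma cspan_sum:
  assumes "finite A" "\<And>a. a \<in> A \<Longrightarrow> g a \<in> cspan S"
  shows "(\<lambda>x. \<Sum>a\<in>A. c a * g a x) \<in> cspan S"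
  using assms
proof (induction A rule: finite_induct)
  case empty
  show ?case
    unfolding cspan_def by (intro CollectI exI[of _ "{}"]) simp
next
  case (insert a A)
  have "(\<lambda>x. \<Sum>a\<in>insert a A. c a * g a x) = (\<lambda>x. c a * g a x + (\<Sum>a\<in>A. c a * g a x))"
    using insert.hyps by simp
  also have "\<dots> \<in> cspan S"
    using insert.prems by (intro cspan_add cspan_scale insert.IH) simp_all
  finally show ?case .
qed

lemma ebas_in_cspan_by_indicator:
  assumes "finite F" "l \<in> F"
    and "(\<lambda>m. if m \<in> F then 1 else 0) \<in> cspan X"
    and "\<And>m. m \<in> F - {l} \<Longrightarrow> ebas m \<in> cspan X"
  shows "ebas l \<in> cspan X"
proof -
  have "ebas l = (\<lambda>x. (if x \<in> F then 1 else 0) + (\<Sum>m\<in>F - {l}. (-1) * ebas m x))"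
    using assms(1,2) by (auto simp: ebas_def sum_negf)
  also have "\<dots> \<in> cspan X"
    using assms by (intro cspan_add cspan_sum) auto
  finally show ?thesis .
qed

section \<open>Fibres and their indicators\<close>

lemma Jgen_eq_image: "Jgen n k r M = etens n M ` Collect (bad_point n k r)"
  by (auto simp: Jgen_def)

lemma bad_pointI:
  assumes "Q \<subseteq> {..<n}" "card Q = k + 1" "w \<noteq> 0" "\<forall>q<n. z q \<noteq> 0"
    and "\<And>q. q \<in> Q \<Longrightarrow> p q \<le> r - 2 \<and> z q = tau r ^ p q * w"
  shows "bad_point n k r z"
proof -
  define xs where "xs = sorted_list_of_set Q"
  have "finite Q"
    using assms(1) finite_subset by blast
  then have len: "length xs = k + 1" and set: "set xs = Q"
    using assms(2) by (simp_all add: xs_def)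
  have "\<forall>a<k. xs ! a < xs ! Suc a"
    using len by (auto simp: xs_def intro: sorted_wrt_nth_less)
  moreover have "xs ! a \<in> Q" if "a \<le> k" for a
    using that len set nth_mem[of a xs] by auto
  ultimately show ?thesis
    unfolding bad_point_def using assms
    by (intro conjI exI[of _ "(!) xs"] exI[of _ w] exI[of _ "p \<circ> (!) xs"]) auto
qed

lemma bad_point_root_point:
  assumes "Q \<subseteq> {..<n}" "card Q = k + 1" "r \<ge> 2" "\<And>q. q \<in> Q \<Longrightarrow> p q < r - 1"
  shows "bad_point n k r
    (\<lambda>q. if q \<in> Q then unit_root (r - 1) ^ p q * unit_root N ^ t else unit_root N ^ p q)"
proof (rule bad_pointI[OF assms(1,2), of "unit_root N ^ t" _ p])
  fix q assume "q \<in> Q"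
  with assms(3) assms(4)[of q] show "p q \<le> r - 2 \<and>
      (if q \<in> Q then unit_root (r - 1) ^ p q * unit_root N ^ t else unit_root N ^ p q)
        = tau r ^ p q * unit_root N ^ t"
    by (simp add: tau_eq_unit_root)
qed simp_all

lemma etens_prod_sum_in_cspan:
  fixes A :: "nat \<Rightarrow> 'a set" and c z :: "nat \<Rightarrow> 'a \<Rightarrow> complex"
  assumes "\<And>q. q < n \<Longrightarrow> finite (A q)"
    and "\<And>f. f \<in> PiE {..<n} A \<Longrightarrow> (\<lambda>q. z q (f q)) \<in> Z"
  shows "(\<lambda>m. if m \<in> PM n M then \<Prod>q<n. \<Sum>a\<in>A q. c q a * z q a powi (m ! q) else 0)
           \<in> cspan (etens n M ` Z)"
proof -
  define coef where "coef f = (\<Prod>q<n. c q (f q))" for f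
  have "(\<Prod>q<n. \<Sum>a\<in>A q. c q a * z q a powi (m ! q))
          = (\<Sum>f\<in>PiE {..<n} A. coef f * etens n M (\<lambda>q. z q (f q)) m)" if "m \<in> PM n M" for m
  proof -
    have "(\<Prod>q<n. \<Sum>a\<in>A q. c q a * z q a powi (m ! q))
          = (\<Sum>f\<in>PiE {..<n} A. \<Prod>q<n. c q (f q) * z q (f q) powi (m ! q))"
      by (rule prod_sum_PiE) (use assms(1) in auto)
    then show ?thesis
      using that by (simp add: coef_def etens_def prod.distrib)
  qed
  then have "(\<lambda>m. if m \<in> PM n M then \<Prod>q<n. \<Sum>a\<in>A q. c q a * z q a powi (m ! q) else 0)
          = (\<lambda>m. \<Sum>f\<in>PiE {..<n} A. coef f * etens n M (\<lambda>q. z q (f q)) m)"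
    by (auto simp: etens_def)
  also have "\<dots> \<in> cspan (etens n M ` Z)"
    using assms by (intro cspan_sum cspan_superset finite_PiE) auto
  finally show ?thesis .
qed

lemma finite_PM: "finite (PM n M)"
proof -
  have "PM n M \<subseteq> {xs. set xs \<subseteq> {- int M..int M} \<and> length xs = n}"
    by (fastforce simp: PM_def in_set_conv_nth abs_le_iff)
  then show ?thesis
    by (rule finite_subset) (simp add: finite_lists_length_eq)
qed

lemma abs_diff_le_PM:
  assumes "l \<in> PM n M" "m \<in> PM n M" "q < n"
  shows "\<bar>m ! q - l ! q\<bar> \<le> 2 * int M"
  using assms unfolding PM_def by fastforce

lemma abs_sum_diff_le_PM:
  assumes "l \<in> PM n M" "m \<in> PM n M" "Q \<subseteq> {..<n}"
  shows "\<bar>\<Sum>q\<in>Q. m ! q - l ! q\<bar> \<le> int (2 * n * M)"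
proof -
  have "\<bar>\<Sum>q\<in>Q. m ! q - l ! q\<bar> \<le> (\<Sum>q\<in>Q. 2 * int M)"
    using assms abs_diff_le_PM[OF assms(1,2)] by (intro order.trans[OF sum_abs] sum_mono) auto
  also have "\<dots> \<le> int (2 * n * M)"
    using card_mono[OF _ assms(3)] by (simp add: mult_right_mono)
  finally show ?thesis .
qed

definition fiber :: "nat \<Rightarrow> nat \<Rightarrow> nat set \<Rightarrow> nat \<Rightarrow> int list \<Rightarrow> int list set" where
  "fiber n M Q R l = {m \<in> PM n M. (\<forall>q<n. q \<notin> Q \<longrightarrow> m ! q = l ! q) \<and>
      (\<Sum>q\<in>Q. m ! q) = (\<Sum>q\<in>Q. l ! q) \<and> (\<forall>q\<in>Q. int R dvd m ! q - l ! q)}"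

lemma fiber_subset_PM: "fiber n M Q R l \<subseteq> PM n M"
  by (auto simp: fiber_def)

text \<open>The average over \<open>t\<close> detects \<open>\<Sum>q\<in>Q. m ! q - l ! q = 0\<close>; the inner averages detect
  \<open>m ! q \<equiv> l ! q (mod R)\<close> on \<open>Q\<close> and \<open>m ! q = l ! q\<close> off \<open>Q\<close>.  Since \<open>N\<close> exceeds every difference
  involved, the detection is exact.\<close>

lemma fiber_indicator_eq_root_sums:
  assumes Q: "Q \<subseteq> {..<n}" and R: "R > 0" and N: "2 * n * M < N"
    and l: "l \<in> PM n M" and m: "m \<in> PM n M"
  shows "(if m \<in> fiber n M Q R l then 1 else 0) =
    (\<Sum>t<N. \<Prod>q<n. if q \<in> Q
        then (\<Sum>a<R. (unit_root R ^ a * unit_root N ^ t) powi (m ! q - l ! q)) / of_nat R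
        else (\<Sum>a<N. (unit_root N ^ a) powi (m ! q - l ! q)) / of_nat N) / of_nat N"
proof -
  define d where "d q = m ! q - l ! q" for q
  define D where "D = (\<Sum>q\<in>Q. d q)"
  define cond where "cond \<longleftrightarrow> (\<forall>q<n. if q \<in> Q then int R dvd d q else d q = 0)"
  have d_less: "\<bar>d q\<bar> < int N" if "q < n" for q
  proof -
    have "M \<le> n * M"
      using that by simp
    with abs_diff_le_PM[OF l m that] N show ?thesis
      unfolding d_def by linarith
  qed
  have D_less: "\<bar>D\<bar> < int N"
    using abs_sum_diff_le_PM[OF l m Q] N unfolding D_def d_def by linarith
  have factor: "(if q \<in> Q
        then (\<Sum>a<R. (unit_root R ^ a * unit_root N ^ t) powi d q) / of_nat R
        else (\<Sum>a<N. (unit_root N ^ a) powi d q) / of_nat N)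
      = (if q \<in> Q then (if int R dvd d q then (unit_root N ^ t) powi d q else 0)
         else if d q = 0 then 1 else 0)" if "q < n" for q t
    using R N by (simp add: sum_unit_root_powers_mult[OF R] sum_unit_root_powers_small[OF d_less[OF that]])
  have prod: "(\<Prod>q<n. if q \<in> Q
        then (\<Sum>a<R. (unit_root R ^ a * unit_root N ^ t) powi d q) / of_nat R
        else (\<Sum>a<N. (unit_root N ^ a) powi d q) / of_nat N)
      = (if cond then (unit_root N ^ t) powi D else 0)" for t
  proof -
    have "(\<Prod>q<n. if q \<in> Q
        then (\<Sum>a<R. (unit_root R ^ a * unit_root N ^ t) powi d q) / of_nat R
        else (\<Sum>a<N. (unit_root N ^ a) powi d q) / of_nat N)
      = (\<Prod>q<n. if q \<in> Q then (if int R dvd d q then (unit_root N ^ t) powi d q else 0)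
         else if d q = 0 then 1 else 0)"
      by (rule prod.cong) (simp_all add: factor)
    also have "\<dots> = (if cond then (unit_root N ^ t) powi D else 0)"
      unfolding cond_def D_def by (rule prod_if_dvd_else_eq_0[OF Q]) simp
    finally show ?thesis .
  qed
  have "cond \<and> D = 0 \<longleftrightarrow> m \<in> fiber n M Q R l"
    using m Q by (auto simp: fiber_def cond_def D_def d_def sum_subtractf)
  then have "(if m \<in> fiber n M Q R l then 1 else 0)
      = (\<Sum>t<N. if cond then (unit_root N ^ t) powi D else 0) / of_nat N"
    using sum_unit_root_powers_small[OF D_less] N by (cases cond) auto
  also have "\<dots> = (\<Sum>t<N. \<Prod>q<n. if q \<in> Q
        then (\<Sum>a<R. (unit_root R ^ a * unit_root N ^ t) powi d q) / of_nat R
        else (\<Sum>a<N. (unit_root N ^ a) powi d q) / of_nat N) / of_nat N"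
    by (simp only: prod)
  finally show ?thesis
    unfolding d_def .
qed

lemma fiber_indicator_in_cspan_Jgen:
  assumes Q: "Q \<subseteq> {..<n}" "card Q = k + 1" and r: "r \<ge> 2" and l: "l \<in> PM n M"
  shows "(\<lambda>m. if m \<in> fiber n M Q (r - 1) l then 1 else 0) \<in> cspan (Jgen n k r M)"
proof -
  define R where "R = r - 1"
  define N where "N = 2 * n * M + 1"
  define A where "A q = {..< if q \<in> Q then R else N}" for q
  define z where "z t q a = (if q \<in> Q then unit_root R ^ a * unit_root N ^ t else unit_root N ^ a)"
    for t q a
  define c where "c t q a = z t q a powi (- l ! q) / of_nat (card (A q))" for t q a
  have R: "R > 0"
    using r by (simp add: R_def)
  have "bad_point n k r (\<lambda>q. z t q (f q))" if "f \<in> PiE {..<n} A" for t f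
  proof -
    have "f q < R" if "q \<in> Q" for q
      using \<open>f \<in> PiE {..<n} A\<close> PiE_mem[of f "{..<n}" A q] Q(1) that by (auto simp: A_def)
    then show ?thesis
      unfolding z_def R_def using bad_point_root_point[OF Q r] by blast
  qed
  moreover have "finite (A q)" for q
    by (simp add: A_def)
  ultimately have terms: "(\<lambda>m. if m \<in> PM n M then \<Prod>q<n. \<Sum>a\<in>A q. c t q a * z t q a powi (m ! q) else 0)
      \<in> cspan (Jgen n k r M)" for t
    unfolding Jgen_eq_image by (intro etens_prod_sum_in_cspan) simp_all
  have factor: "(\<Sum>a\<in>A q. c t q a * z t q a powi (m ! q))
      = (if q \<in> Q
        then (\<Sum>a<R. (unit_root R ^ a * unit_root N ^ t) powi (m ! q - l ! q)) / of_nat R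
        else (\<Sum>a<N. (unit_root N ^ a) powi (m ! q - l ! q)) / of_nat N)" for t q m
  proof -
    have "c t q a * z t q a powi (m ! q) = z t q a powi (m ! q - l ! q) / of_nat (card (A q))" for a
      by (simp add: c_def z_def power_int_add[symmetric])
    then show ?thesis
      by (simp add: A_def z_def sum_divide_distrib)
  qed
  have "(if m \<in> fiber n M Q R l then 1 else 0) = (\<Sum>t<N. (1 / of_nat N) *
      (if m \<in> PM n M then \<Prod>q<n. \<Sum>a\<in>A q. c t q a * z t q a powi (m ! q) else 0))" for m
  proof (cases "m \<in> PM n M")
    case True
    moreover have "2 * n * M < N"
      by (simp add: N_def)
    ultimately show ?thesis
      using fiber_indicator_eq_root_sums[OF Q(1) R _ l] by (simp add: factor sum_divide_distrib)
  qed (simp add: fiber_def)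
  then have "(\<lambda>m. if m \<in> fiber n M Q R l then 1 else 0) = (\<lambda>m. \<Sum>t<N. (1 / of_nat N) *
      (if m \<in> PM n M then \<Prod>q<n. \<Sum>a\<in>A q. c t q a * z t q a powi (m ! q) else 0))"
    by (rule ext)
  also have "\<dots> \<in> cspan (Jgen n k r M)"
    by (intro cspan_sum terms) simp
  finally show ?thesis
    by (simp add: R_def)
qed

section \<open>A potential increasing along fibres\<close>

text \<open>The strict total order on positions behind \<^const>\<open>rho\<close>: \<open>rho l a > rho l b\<close> iff
  \<open>precedes l a b\<close>, and \<open>rank_pos l b\<close> counts the positions preceding \<open>b\<close>.\<close>

definition precedes :: "int list \<Rightarrow> nat \<Rightarrow> nat \<Rightarrow> bool" where
  "precedes l a b \<longleftrightarrow> l ! a > l ! b \<or> (l ! a = l ! b \<and> a < b)"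

lemma precedes_irrefl: "\<not> precedes l a a"
  by (simp add: precedes_def)

lemma precedes_trans: "precedes l a b \<Longrightarrow> precedes l b c \<Longrightarrow> precedes l a c"
  unfolding precedes_def by auto

lemma precedes_total: "a \<noteq> b \<Longrightarrow> precedes l a b \<or> precedes l b a"
  unfolding precedes_def by auto

definition window :: "int list \<Rightarrow> nat \<Rightarrow> nat \<Rightarrow> nat set" where
  "window l i j = {q. q < length l \<and> \<not> precedes l q i \<and> (precedes l q j \<or> q = j)}"

lemma window_bounds:
  assumes "q \<in> window l i j"
  shows "q < length l" "l ! j \<le> l ! q" "l ! q \<le> l ! i"
    "l ! q = l ! i \<Longrightarrow> i \<le> q" "l ! q = l ! j \<Longrightarrow> q \<le> j"
  using assms by (auto simp: window_def precedes_def)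

lemma card_window:
  assumes j: "j < length l" and rank: "rank_pos l j = rank_pos l i + k" and k: "k \<ge> 1"
  shows "card (window l i j) = k + 1"
proof -
  define before where "before b = {a. a < length l \<and> precedes l a b}" for b
  have rank_before: "rank_pos l b = card (before b)" for b
    by (simp add: rank_pos_def before_def precedes_def)
  have fin: "finite (before b)" for b
    by (simp add: before_def)
  have "precedes l i j"
  proof (rule ccontr)
    assume "\<not> precedes l i j"
    then have "before j \<subseteq> before i"
      using precedes_total[of i j l] by (auto simp: before_def intro: precedes_trans)
    then have "rank_pos l j \<le> rank_pos l i"
      by (simp add: rank_before card_mono fin)
    with rank k show False by simp
  qed
  then have sub: "before i \<subseteq> before j"
    by (auto simp: before_def intro: precedes_trans)
  have "\<not> precedes l j i"
    using \<open>precedes l i j\<close> precedes_irrefl precedes_trans by blast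
  then have window_eq: "window l i j = insert j (before j - before i)"
    using j by (auto simp: window_def before_def)
  have "j \<notin> before j"
    by (simp add: before_def precedes_irrefl)
  with window_eq have "card (window l i j) = card (before j) - card (before i) + 1"
    by (simp add: fin card_Diff_subset[OF fin sub])
  with rank show ?thesis
    by (simp add: rank_before)
qed

lemma sq_le_in_residue_class:
  fixes R x y c :: int
  assumes R: "R > 0" and cong: "R dvd x - y" and close: "\<bar>2 * y - c\<bar> \<le> R"
  shows "(2 * y - c)\<^sup>2 \<le> (2 * x - c)\<^sup>2"
    and "(2 * x - c)\<^sup>2 = (2 * y - c)\<^sup>2 \<Longrightarrow>
      x = y \<or> (x = y + R \<and> 2 * y - c = - R) \<or> (x = y - R \<and> 2 * y - c = R)"
proof -
  obtain t where "x - y = R * t"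
    using cong by (elim dvdE)
  then have x: "x = y + R * t"
    by simp
  define a where "a = 2 * y - c"
  have diff: "(2 * x - c)\<^sup>2 - (2 * y - c)\<^sup>2 = 4 * R * (t * (a + R * t))"
    by (simp add: x a_def power2_eq_square algebra_simps)
  have "t = 0 \<or> 1 \<le> t \<or> t \<le> -1"
    by linarith
  then have "t = 0 \<or> (1 \<le> t \<and> R * 1 \<le> R * t) \<or> (t \<le> -1 \<and> R * t \<le> R * (-1))"
    using R mult_left_mono[of 1 t R] mult_left_mono[of t "-1" R] by auto
  then have t: "t = 0 \<or> (1 \<le> t \<and> 0 \<le> a + R * t) \<or> (t \<le> -1 \<and> a + R * t \<le> 0)"
    using close by (auto simp: a_def)
  then have "0 \<le> t * (a + R * t)"
    by (auto intro: mult_nonpos_nonpos)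
  with R have "0 \<le> 4 * R * (t * (a + R * t))"
    by (simp add: mult_nonneg_nonneg)
  with diff show "(2 * y - c)\<^sup>2 \<le> (2 * x - c)\<^sup>2"
    by simp
  assume "(2 * x - c)\<^sup>2 = (2 * y - c)\<^sup>2"
  with diff R have "t * (a + R * t) = 0"
    by simp
  have "t = 0 \<or> (t = 1 \<and> a = - R) \<or> (t = -1 \<and> a = R)"
  proof (cases "t = 0")
    case False
    with \<open>t * (a + R * t) = 0\<close> have a: "a = - (R * t)"
      by simp
    with close have "R * t \<le> R * 1" "R * (-1) \<le> R * t"
      by (auto simp: a_def)
    with R have "t \<le> 1" "-1 \<le> t"
      by (simp_all only: mult_le_cancel_left_pos)
    then have "t = 1 \<or> t = -1"
      using False by linarith
    with a show ?thesis
      by auto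
  qed simp
  then show "x = y \<or> (x = y + R \<and> 2 * y - c = - R) \<or> (x = y - R \<and> 2 * y - c = R)"
    by (auto simp: x a_def)
qed

definition sq_norm :: "int list \<Rightarrow> int" where
  "sq_norm l = (\<Sum>q<length l. (l ! q)\<^sup>2)"

definition index_moment :: "int list \<Rightarrow> int" where
  "index_moment l = (\<Sum>q<length l. int q * l ! q)"

definition potential :: "int list \<Rightarrow> int \<times> int" where
  "potential l = (sq_norm l, - index_moment l)"

lemma sum_diff_eq_sum_over_support:
  fixes f :: "nat \<Rightarrow> int \<Rightarrow> int"
  assumes "length m = length l" "Q \<subseteq> {..<length l}" "\<forall>q<length l. q \<notin> Q \<longrightarrow> m ! q = l ! q"
  shows "(\<Sum>q<length m. f q (m ! q)) - (\<Sum>q<length l. f q (l ! q)) = (\<Sum>q\<in>Q. f q (m ! q) - f q (l ! q))"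
proof -
  have "(\<Sum>q<length m. f q (m ! q)) - (\<Sum>q<length l. f q (l ! q)) = (\<Sum>q<length l. f q (m ! q) - f q (l ! q))"
    using assms(1) by (simp add: sum_subtractf)
  also have "\<dots> = (\<Sum>q\<in>Q. f q (m ! q) - f q (l ! q))"
    using assms(2,3) by (intro sum.mono_neutral_right) auto
  finally show ?thesis .
qed

lemma fiber_window_sq_norm:
  assumes m: "m \<in> fiber n M (window l i j) R l" and len: "length l = n"
    and R: "R > 0" and gap: "l ! i - l ! j \<le> int R"
  shows "sq_norm l \<le> sq_norm m"
    and "sq_norm m = sq_norm l \<Longrightarrow> q \<in> window l i j \<Longrightarrow> m ! q = l ! q \<or>
      (m ! q = l ! q + int R \<and> l ! q = l ! j \<and> l ! i - l ! j = int R) \<or>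
      (m ! q = l ! q - int R \<and> l ! q = l ! i \<and> l ! i - l ! j = int R)"
proof -
  define Q where "Q = window l i j"
  define c where "c = l ! i + l ! j"
  define growth where "growth q = (2 * m ! q - c)\<^sup>2 - (2 * l ! q - c)\<^sup>2" for q
  have finQ: "finite Q" and QS: "Q \<subseteq> {..<length l}"
    by (auto simp: Q_def window_def)
  have lm: "length m = length l" and off: "\<forall>q<length l. q \<notin> Q \<longrightarrow> m ! q = l ! q"
    and sum: "(\<Sum>q\<in>Q. m ! q) = (\<Sum>q\<in>Q. l ! q)" and cong: "\<forall>q\<in>Q. int R dvd m ! q - l ! q"
    using m len by (auto simp: fiber_def PM_def Q_def)
  have close: "\<bar>2 * l ! q - c\<bar> \<le> int R" if "q \<in> Q" for q
    using window_bounds[of q l i j] that gap by (auto simp: Q_def c_def)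
  note residue = sq_le_in_residue_class[of "int R" "m ! q" "l ! q" c for q]
  have growth_nonneg: "0 \<le> growth q" if "q \<in> Q" for q
    using residue(1) R cong close that by (simp add: growth_def)
  have "(\<Sum>q\<in>Q. growth q) = (\<Sum>q\<in>Q. 4 * ((m ! q)\<^sup>2 - (l ! q)\<^sup>2) - 4 * c * (m ! q - l ! q))"
    by (intro sum.cong) (simp_all add: growth_def power2_eq_square algebra_simps)
  also have "\<dots> = 4 * (\<Sum>q\<in>Q. (m ! q)\<^sup>2 - (l ! q)\<^sup>2) - 4 * c * (\<Sum>q\<in>Q. m ! q - l ! q)"
    by (simp add: sum_subtractf flip: sum_distrib_left)
  also have "\<dots> = 4 * (sq_norm m - sq_norm l)"
    using sum_diff_eq_sum_over_support[OF lm QS off, of "\<lambda>_ x. x\<^sup>2"] sum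
    by (simp add: sq_norm_def sum_subtractf)
  finally have growth_sum: "(\<Sum>q\<in>Q. growth q) = 4 * (sq_norm m - sq_norm l)" .
  moreover have "0 \<le> (\<Sum>q\<in>Q. growth q)"
    using growth_nonneg by (rule sum_nonneg)
  ultimately show "sq_norm l \<le> sq_norm m"
    by simp
  assume "sq_norm m = sq_norm l" "q \<in> window l i j"
  with growth_sum growth_nonneg have "growth q = 0"
    using sum_nonneg_eq_0_iff[OF finQ] by (auto simp: Q_def)
  with residue(2) R cong close \<open>q \<in> window l i j\<close>
  have "m ! q = l ! q \<or> (m ! q = l ! q + int R \<and> 2 * l ! q - c = - int R) \<or>
      (m ! q = l ! q - int R \<and> 2 * l ! q - c = int R)"
    by (simp add: growth_def Q_def)
  then show "m ! q = l ! q \<or>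
      (m ! q = l ! q + int R \<and> l ! q = l ! j \<and> l ! i - l ! j = int R) \<or>
      (m ! q = l ! q - int R \<and> l ! q = l ! i \<and> l ! i - l ! j = int R)"
    using window_bounds[OF \<open>q \<in> window l i j\<close>] gap by (auto simp: c_def)
qed

lemma exists_neg_of_sum_eq_0:
  fixes f :: "'a \<Rightarrow> 'b :: {ordered_comm_monoid_add, linorder}"
  assumes "finite A" "(\<Sum>a\<in>A. f a) = 0" "a \<in> A" "f a \<noteq> 0"
  shows "\<exists>b\<in>A. f b < 0"
  using assms sum_nonneg_eq_0_iff[of A f] by (metis not_le_imp_less)

lemma potential_less_on_fiber:
  assumes m: "m \<in> fiber n M (window l i j) R l" "m \<noteq> l" and len: "length l = n"
    and R: "R > 0" and gap: "l ! i - l ! j < int R \<or> (l ! i - l ! j = int R \<and> j < i)"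
  shows "potential l < potential m"
proof (cases "sq_norm l < sq_norm m")
  case True
  then show ?thesis
    by (simp add: potential_def)
next
  case False
  define Q where "Q = window l i j"
  define shift where "shift q = m ! q - l ! q" for q
  have gap': "l ! i - l ! j \<le> int R"
    using gap by auto
  have "sq_norm m = sq_norm l"
    using False fiber_window_sq_norm(1)[OF m(1) len R gap'] by simp
  note moves = fiber_window_sq_norm(2)[OF m(1) len R gap' this]
  have finQ: "finite Q" and QS: "Q \<subseteq> {..<length l}"
    by (auto simp: Q_def window_def)
  have lm: "length m = length l" and off: "\<forall>q<length l. q \<notin> Q \<longrightarrow> m ! q = l ! q"
    and sum: "(\<Sum>q\<in>Q. shift q) = 0"
    using m len by (auto simp: fiber_def PM_def Q_def shift_def sum_subtractf)
  obtain q0 where "q0 \<in> Q" "shift q0 \<noteq> 0"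
    using lm off m(2) nth_equalityI[OF lm] by (auto simp: shift_def)
  then obtain q1 where q1: "q1 \<in> Q" "shift q1 < 0"
    using exists_neg_of_sum_eq_0[OF finQ sum] by blast
  then have "l ! i - l ! j = int R" "l ! q1 = l ! i"
    using moves[of q1] R by (auto simp: Q_def shift_def)
  then have "j < i" "i \<le> q1"
    using gap window_bounds(4)[of q1 l i j] q1(1) by (auto simp: Q_def)
  have step: "(int q - int j) * shift q \<le> 0" if "q \<in> Q" for q
    using moves[of q] window_bounds[of q l i j] that \<open>j < i\<close> R
    by (auto simp: Q_def shift_def mult_nonpos_nonneg mult_nonneg_nonpos)
  have "index_moment m - index_moment l = (\<Sum>q\<in>Q. int q * shift q)"
    using sum_diff_eq_sum_over_support[OF lm QS off, of "\<lambda>q x. int q * x"]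
    by (simp add: index_moment_def shift_def right_diff_distrib)
  also have "\<dots> = (\<Sum>q\<in>Q. (int q - int j) * shift q)"
    using sum by (simp add: left_diff_distrib sum_subtractf flip: sum_distrib_left)
  also have "\<dots> < (\<Sum>q\<in>Q. 0)"
    using step q1 \<open>j < i\<close> \<open>i \<le> q1\<close>
    by (intro sum_strict_mono_ex1[OF finQ]) (auto intro!: bexI[of _ q1] mult_pos_neg)
  finally show ?thesis
    using \<open>sq_norm m = sq_norm l\<close> by (simp add: potential_def)
qed

lemma Sset_fiber_potential_less:
  assumes l: "l \<in> Sset n k r" and k: "k \<ge> 1" and r: "r \<ge> 2"
  obtains Q where "Q \<subseteq> {..<n}" "card Q = k + 1"
    "\<And>m. m \<in> fiber n M Q (r - 1) l \<Longrightarrow> m \<noteq> l \<Longrightarrow> potential l < potential m"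
proof -
  obtain i j where nb: "neighborhood (k + 1) (r - 1) l i j" and len: "length l = n"
    using l by (auto simp: Sset_def)
  then have j: "j < length l" and "rho l i - rho l j = real k"
    by (auto simp: neighborhood_def)
  then have rank: "rank_pos l j = rank_pos l i + k"
    by (simp add: rho_def)
  have gap: "l ! i - l ! j < int (r - 1) \<or> (l ! i - l ! j = int (r - 1) \<and> j < i)"
    using nb by (auto simp: neighborhood_def)
  show ?thesis
  proof (rule that)
    show "window l i j \<subseteq> {..<n}"
      using len by (auto simp: window_def)
    show "card (window l i j) = k + 1"
      by (rule card_window[OF j rank k])
    show "potential l < potential m" if "m \<in> fiber n M (window l i j) (r - 1) l" "m \<noteq> l" for m
      using potential_less_on_fiber[OF that len _ gap] r by simp
  qed
qed

lemma wf_greater_on_finite: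
  fixes f :: "'a \<Rightarrow> 'b :: order"
  assumes "finite A"
  shows "wf {(x, y). x \<in> A \<and> y \<in> A \<and> f y < f x}"
proof (rule finite_acyclic_wf)
  show "finite {(x, y). x \<in> A \<and> y \<in> A \<and> f y < f x}"
    by (rule finite_subset[of _ "A \<times> A"]) (auto simp: assms)
  have "trans {(x, y). x \<in> A \<and> y \<in> A \<and> f y < f x}"
    by (auto simp: trans_def)
  then show "acyclic {(x, y). x \<in> A \<and> y \<in> A \<and> f y < f x}"
    by (simp add: acyclic_irrefl irrefl_def)
qed

lemma Sset_ebas_in_cspan:
  assumes l: "l \<in> Sset n k r" "l \<in> PM n M" and k: "k \<ge> 1" and r: "r \<ge> 2"
    and J: "Jgen n k r M \<subseteq> X"
    and higher: "\<And>m. m \<in> PM n M \<Longrightarrow> potential l < potential m \<Longrightarrow> ebas m \<in> cspan X"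
  shows "ebas l \<in> cspan X"
proof -
  obtain Q where Q: "Q \<subseteq> {..<n}" "card Q = k + 1"
    and up: "\<And>m. m \<in> fiber n M Q (r - 1) l \<Longrightarrow> m \<noteq> l \<Longrightarrow> potential l < potential m"
    using Sset_fiber_potential_less[OF l(1) k r] by blast
  show ?thesis
  proof (rule ebas_in_cspan_by_indicator)
    show "finite (fiber n M Q (r - 1) l)"
      using fiber_subset_PM finite_PM by (rule finite_subset)
    show "l \<in> fiber n M Q (r - 1) l"
      using l(2) by (simp add: fiber_def)
    show "(\<lambda>m. if m \<in> fiber n M Q (r - 1) l then 1 else 0) \<in> cspan X"
      using J fiber_indicator_in_cspan_Jgen[OF Q r l(2)] by (rule cspan_mono)
    show "ebas m \<in> cspan X" if "m \<in> fiber n M Q (r - 1) l - {l}" for m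
      using that fiber_subset_PM up higher by blast
  qed
qed

theorem proposition5p1:
  fixes n k r M :: nat
  assumes "n \<ge> 2" and "1 \<le> k" and "k \<le> n - 1" and "r \<ge> 2"
  shows "\<forall>l \<in> Sset n k r \<inter> PM n M.
           ebas l \<in> cspan (Jgen n k r M \<union> ebas ` (Bset n k r \<inter> PM n M))"
proof -
  define X where "X = Jgen n k r M \<union> ebas ` (Bset n k r \<inter> PM n M)"
  have "ebas l \<in> cspan X" if "l \<in> PM n M" for l
    using wf_greater_on_finite[OF finite_PM, of n M potential] that
  proof (induction l rule: wf_induct_rule)
    case (less l)
    show ?case
    proof (cases "l \<in> Bset n k r")
      case True
      with less.prems show ?thesis
        by (intro cspan_superset) (simp add: X_def)
    next
      case False
      with less.prems have "l \<in> Sset n k r"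
        by (simp add: Bset_def PM_def)
      then show ?thesis
      proof (rule Sset_ebas_in_cspan[OF _ less.prems assms(2,4)])
        show "Jgen n k r M \<subseteq> X"
          by (simp add: X_def)
        show "ebas m \<in> cspan X" if "m \<in> PM n M" "potential l < potential m" for m
          using less.IH[of m] less.prems that by simp
      qed
    qed
  qed
  then show ?thesis
    by (simp add: X_def)
qed

end
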